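(* Let $M$ be such that $\sqrt M$ is an even integer, and consider $M$-QAM with transmitted constellation points $x+\mathrm jy$, $x,y\in\{\pm1,\pm3,\dots,\pm(\sqrt M-1)\}$, normalized by $k_1=\sqrt{3/(2(M-1))}$, each sent with equal probability. Fix $K\ge1$, nonzero channel coefficients $\tilde h_1,\dots,\tilde h_K$, $\sigma_1^2,\sigma_2^2>0$, and $\vec\rho\in[0,1]^K\setminus\{\vec0,\vec1\}$; let $\Theta_1=\sum_k\rho_k|\tilde h_k|^2$, $\Theta_2=\sum_k(1-\rho_k)^2|\tilde h_k|^4$. When the symbol $(x_i,y_i)$ is sent, the receiver observes $\tilde Y_1=\breve x_i+\mathrm j\breve y_i+\tilde Z$ and $Y_2=\breve z_i+N$, where $\breve x_i=k_1\sqrt{\Theta_1P}x_i$, $\breve y_i=k_1\sqrt{\Theta_1P}y_i$, $\breve z_i=k_1^2\sqrt{\Theta_2}P(x_i^2+y_i^2)$, $\tilde Z\sim\mathcal{CN}(0,\sigma_1^2)$ and $N\sim\mathcal N(0,\sigma_2^2)$ independent, and maximum-likelihood detection is used. Let $\breve x_1=k_1\sqrt{\Theta_1P}$ (the value for in-phase coordinate $1$). Then in the high-SNR regime ($P\to\infty$) the symbol error rate satisfies $$P_e\approx\frac{4}{\sqrt M}\,Q\Big(\frac{\sqrt2\,\breve x_1}{\sigma_1}\Big).$$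
   Context: $Q(x)=\frac12\mathrm{erfc}(x/\sqrt2)$; $\sigma_1$ is the positive square root of $\sigma_1^2$; $\vec0=(0,\dots,0)$, $\vec1=(1,\dots,1)$; $\mathcal{CN}(0,\sigma^2)$ has variance $\sigma^2/2$ per real dimension. $P_e=\frac1M\sum_i\Pr(\text{error}\mid i\text{ sent})$. The relation $\approx$ denotes the high-SNR asymptotic approximation as $P\to\infty$ (asymptotic equivalence). *)

theory Defs
  imports "HOL-Probability.Probability" "HOL-Library.Landau_Symbols"
begin

definition erfc :: "real \<Rightarrow> real" where
  "erfc x = 2 / sqrt pi * (LINT t:{x..}|lborel. exp (- (t ^ 2)))"

definition Q_func :: "real \<Rightarrow> real" where
  "Q_func x = erfc (x / sqrt 2) / 2"

text \<open>PAM amplitudes {+-1, +-3, ..., +-(m-1)} for m = sqrt M, and the QAM symbol set.\<close>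
definition qam_amps :: "nat \<Rightarrow> int set" where
  "qam_amps m = {a. odd a \<and> \<bar>a\<bar> \<le> int m - 1}"

definition qam_symbols :: "nat \<Rightarrow> (int \<times> int) set" where
  "qam_symbols m = qam_amps m \<times> qam_amps m"

definition qam_k1 :: "nat \<Rightarrow> real" where
  "qam_k1 M = sqrt (3 / (2 * (real M - 1)))"

text \<open>Noiseless received point (Re Y1, Im Y1, Y2) = (x_breve, y_breve, z_breve) for symbol s.\<close>
definition rx_mean :: "nat \<Rightarrow> real \<Rightarrow> real \<Rightarrow> real \<Rightarrow> int \<times> int \<Rightarrow> real \<times> real \<times> real" where
  "rx_mean M \<Theta>1 \<Theta>2 P s =
     (qam_k1 M * sqrt (\<Theta>1 * P) * of_int (fst s),
      qam_k1 M * sqrt (\<Theta>1 * P) * of_int (snd s),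
      (qam_k1 M)\<^sup>2 * sqrt \<Theta>2 * P * ((of_int (fst s))\<^sup>2 + (of_int (snd s))\<^sup>2))"

text \<open>Likelihood of observation r given mean mu: CN(0,s1sq) noise = two independent real
  N(0,s1sq/2) components, plus independent real N(0,s2sq) noise on Y2.
  normal_density takes the standard deviation.\<close>
definition rx_lik :: "real \<Rightarrow> real \<Rightarrow> real \<times> real \<times> real \<Rightarrow> real \<times> real \<times> real \<Rightarrow> real" where
  "rx_lik s1sq s2sq \<mu> r =
     normal_density (fst \<mu>) (sqrt (s1sq / 2)) (fst r) *
     normal_density (fst (snd \<mu>)) (sqrt (s1sq / 2)) (fst (snd r)) *
     normal_density (snd (snd \<mu>)) (sqrt s2sq) (snd (snd r))"

definition ml_error_region ::
  "nat \<Rightarrow> nat \<Rightarrow> real \<Rightarrow> real \<Rightarrow> real \<Rightarrow> real \<Rightarrow> real \<Rightarrow> int \<times> int \<Rightarrow> (real \<times> real \<times> real) set" where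
  "ml_error_region M m \<Theta>1 \<Theta>2 s1sq s2sq P s =
     {r. \<exists>t \<in> qam_symbols m. t \<noteq> s \<and>
          rx_lik s1sq s2sq (rx_mean M \<Theta>1 \<Theta>2 P t) r \<ge> rx_lik s1sq s2sq (rx_mean M \<Theta>1 \<Theta>2 P s) r}"

definition ml_cond_error ::
  "nat \<Rightarrow> nat \<Rightarrow> real \<Rightarrow> real \<Rightarrow> real \<Rightarrow> real \<Rightarrow> real \<Rightarrow> int \<times> int \<Rightarrow> real" where
  "ml_cond_error M m \<Theta>1 \<Theta>2 s1sq s2sq P s =
     (LINT r|lborel. indicator (ml_error_region M m \<Theta>1 \<Theta>2 s1sq s2sq P s) r *
                     rx_lik s1sq s2sq (rx_mean M \<Theta>1 \<Theta>2 P s) r)"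

definition qam_Pe :: "nat \<Rightarrow> nat \<Rightarrow> real \<Rightarrow> real \<Rightarrow> real \<Rightarrow> real \<Rightarrow> real \<Rightarrow> real" where
  "qam_Pe M m \<Theta>1 \<Theta>2 s1sq s2sq P =
     (1 / real M) * (\<Sum>s\<in>qam_symbols m. ml_cond_error M m \<Theta>1 \<Theta>2 s1sq s2sq P s)"

end

theory Submission
  imports Defs "HOL-Real_Asymp.Real_Asymp"
begin

text \<open>Given the sent symbol, the observation (Re Y1, Im Y1, Y2) is Gaussian, and ML detection compares
  weighted squared distances to the candidate means. A Chernoff bound shows that the pairwise error
  probability towards another symbol is at most exp(-d/4), d being the weighted squared distance of
  the two means. A symbol next to an axis has its mirror image across that axis at the same energy;
  the pairwise error towards this mirror image only depends on the sign of one Gaussian coordinate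
  and is exactly Q(sqrt 2 x1/sigma1), where x1 is the in-phase amplitude of coordinate 1. Every other
  competitor either has a different energy, and then the Y2 component separates the means by order P,
  or lies at squared lattice distance at least 8; in both cases the pairwise error is
  O(exp(-2 x1^2/sigma1^2)), which is negligible against
  Q(sqrt 2 x1/sigma1) >= exp(-(x1/sigma1 + 1)^2)/sqrt pi. As the constellation has 4 sqrt M pairs of a
  symbol and an adjacent axis, the union bound and inclusion-exclusion give
  P_e = 4/sqrt M Q(sqrt 2 x1/sigma1) + O(M exp(-2 x1^2/sigma1^2)).\<close>

lemma nn_integral_lborel_prod:
  fixes g :: "'a::euclidean_space \<Rightarrow> ennreal" and h :: "'b::euclidean_space \<Rightarrow> ennreal"
  assumes [measurable]: "g \<in> borel_measurable borel" "h \<in> borel_measurable borel"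
  shows "(\<integral>\<^sup>+r. g (fst r) * h (snd r) \<partial>lborel) = integral\<^sup>N lborel g * integral\<^sup>N lborel h"
proof -
  have "(\<integral>\<^sup>+r. g (fst r) * h (snd r) \<partial>lborel) = (\<integral>\<^sup>+x. \<integral>\<^sup>+y. g x * h y \<partial>lborel \<partial>lborel)"
    by (simp add: lborel_prod[symmetric] lborel.nn_integral_fst[symmetric])
  also have "\<dots> = integral\<^sup>N lborel g * integral\<^sup>N lborel h"
    by (simp add: nn_integral_cmult nn_integral_multc)
  finally show ?thesis .
qed

lemma nn_integral_lborel_prod3:
  fixes f g h :: "real \<Rightarrow> ennreal"
  assumes [measurable]: "f \<in> borel_measurable borel" "g \<in> borel_measurable borel" "h \<in> borel_measurable borel"
  shows "(\<integral>\<^sup>+r. f (fst r) * g (fst (snd r)) * h (snd (snd r)) \<partial>lborel) =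
    integral\<^sup>N lborel f * integral\<^sup>N lborel g * integral\<^sup>N lborel h"
proof -
  have [measurable]: "(\<lambda>y::real \<times> real. g (fst y) * h (snd y)) \<in> borel_measurable borel"
    unfolding borel_prod[symmetric] by measurable
  have "(\<integral>\<^sup>+r. f (fst r) * g (fst (snd r)) * h (snd (snd r)) \<partial>lborel) =
      (\<integral>\<^sup>+r. f (fst r) * (\<lambda>y. g (fst y) * h (snd y)) (snd r) \<partial>lborel)"
    by (simp add: mult.assoc)
  also have "\<dots> = integral\<^sup>N lborel f * (\<integral>\<^sup>+y. g (fst y) * h (snd y) \<partial>lborel)"
    by (rule nn_integral_lborel_prod) measurable
  also have "\<dots> = integral\<^sup>N lborel f * integral\<^sup>N lborel g * integral\<^sup>N lborel h"
    by (simp add: nn_integral_lborel_prod mult.assoc)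
  finally show ?thesis .
qed

lemma nn_integral_normal_density: "\<sigma> > 0 \<Longrightarrow> (\<integral>\<^sup>+x. ennreal (normal_density \<mu> \<sigma> x) \<partial>lborel) = 1"
  by (subst nn_integral_eq_integral) (auto intro: integrable_normal_density)

lemma exp_times_normal_density:
  assumes "\<sigma> > 0"
  shows "exp (c * (x - \<mu>)) * normal_density \<mu> \<sigma> x =
    exp (c\<^sup>2 * \<sigma>\<^sup>2 / 2) * normal_density (\<mu> + c * \<sigma>\<^sup>2) \<sigma> x"
proof -
  have "c * (x - \<mu>) - (x - \<mu>)\<^sup>2 / (2 * \<sigma>\<^sup>2) = c\<^sup>2 * \<sigma>\<^sup>2 / 2 - (x - (\<mu> + c * \<sigma>\<^sup>2))\<^sup>2 / (2 * \<sigma>\<^sup>2)"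
    using assms by (simp add: field_simps power2_eq_square)
  then show ?thesis
    unfolding normal_density_def by (simp add: mult.left_commute exp_add[symmetric] exp_diff[symmetric])
qed

lemma nn_integral_exp_times_normal_density:
  assumes "\<sigma> > 0"
  shows "(\<integral>\<^sup>+x. ennreal (exp (c * (x - \<mu>)) * normal_density \<mu> \<sigma> x) \<partial>lborel) =
    ennreal (exp (c\<^sup>2 * \<sigma>\<^sup>2 / 2))"
  using assms by (simp add: exp_times_normal_density ennreal_mult nn_integral_cmult nn_integral_normal_density)

lemma normal_density_half_variance: "normal_density 0 (1 / sqrt 2) t = exp (- t\<^sup>2) / sqrt pi"
  by (simp add: normal_density_def power_divide real_sqrt_mult)

lemma Q_func_nn_integral:
  "ennreal (Q_func x) =
    (\<integral>\<^sup>+t. indicator {x / sqrt 2..} t * ennreal (normal_density 0 (1 / sqrt 2) t) \<partial>lborel)"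
proof -
  let ?f = "\<lambda>t. indicator {x / sqrt 2..} t * normal_density 0 (1 / sqrt 2) t"
  have "integrable lborel ?f"
    using integrable_real_mult_indicator[of "{x / sqrt 2..}" lborel "normal_density 0 (1 / sqrt 2)"]
    by (simp add: mult.commute)
  moreover have "Q_func x = (LINT t|lborel. ?f t)"
    unfolding Q_func_def erfc_def set_lebesgue_integral_def normal_density_half_variance
    by simp
  ultimately have "ennreal (Q_func x) = (\<integral>\<^sup>+t. ennreal (?f t) \<partial>lborel)"
    by (simp add: nn_integral_eq_integral)
  then show ?thesis
    by (simp add: indicator_mult_ennreal mult.commute)
qed

lemma Q_func_nonneg: "Q_func x \<ge> 0"
  unfolding Q_func_def erfc_def set_lebesgue_integral_def
  by (auto intro!: integral_nonneg_AE simp: indicator_def)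

lemma Q_func_lower_bound:
  assumes "x \<ge> 0"
  shows "exp (- (x / sqrt 2 + 1)\<^sup>2) / sqrt pi \<le> Q_func x"
proof -
  define y where "y = x / sqrt 2"
  define e where "e = exp (- (y + 1)\<^sup>2) / sqrt pi"
  have "y \<ge> 0" using assms by (simp add: y_def)
  have density_ge: "e \<le> normal_density 0 (1 / sqrt 2) t" if "t \<in> {y..y+1}" for t
  proof -
    have "t\<^sup>2 \<le> (y + 1)\<^sup>2" using that \<open>y \<ge> 0\<close> by (intro power_mono) auto
    then show ?thesis unfolding e_def normal_density_half_variance by (intro divide_right_mono) auto
  qed
  have "ennreal e = (\<integral>\<^sup>+t. ennreal e * indicator {y..y+1} t \<partial>lborel)"
    by (simp add: nn_integral_cmult_indicator)
  also have "\<dots> \<le> (\<integral>\<^sup>+t. indicator {y..} t * ennreal (normal_density 0 (1 / sqrt 2) t) \<partial>lborel)"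
    using density_ge by (intro nn_integral_mono) (auto simp: indicator_def)
  also have "\<dots> = ennreal (Q_func x)" by (simp add: Q_func_nn_integral y_def)
  finally show ?thesis by (simp add: e_def y_def Q_func_nonneg)
qed

lemma nn_integral_normal_density_sign_flip:
  assumes "\<mu> \<noteq> 0" "\<sigma> > 0"
  shows "(\<integral>\<^sup>+x. indicator {x. \<mu> * x \<le> 0} x * ennreal (normal_density \<mu> \<sigma> x) \<partial>lborel) =
    Q_func (\<bar>\<mu>\<bar> / \<sigma>)"
proof -
  define c where "c = - sgn \<mu> * \<sigma> * sqrt 2"
  have c: "c \<noteq> 0" "\<bar>c\<bar> = \<sigma> * sqrt 2" "c\<^sup>2 = 2 * \<sigma>\<^sup>2"
    using assms by (auto simp: c_def abs_mult power_mult_distrib sgn_if)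
  have in_set_iff: "\<mu> + c * t \<in> {x. \<mu> * x \<le> 0} \<longleftrightarrow> t \<in> {\<bar>\<mu>\<bar> / \<sigma> / sqrt 2..}" for t
  proof -
    have "sgn \<mu> * \<mu> = \<bar>\<mu>\<bar>" by (simp add: abs_sgn mult.commute)
    then have "\<mu> * (\<mu> + c * t) = \<bar>\<mu>\<bar> * (\<bar>\<mu>\<bar> - \<sigma> * sqrt 2 * t)"
      unfolding c_def by (simp add: algebra_simps power2_eq_square abs_mult_self_eq)
    then have "\<mu> * (\<mu> + c * t) \<le> 0 \<longleftrightarrow> \<bar>\<mu>\<bar> - \<sigma> * sqrt 2 * t \<le> 0"
      using assms by (simp add: mult_le_0_iff)
    also have "\<dots> \<longleftrightarrow> \<bar>\<mu>\<bar> / \<sigma> / sqrt 2 \<le> t"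
      using assms by (simp add: field_simps)
    finally show ?thesis by simp
  qed
  have density_eq: "\<bar>c\<bar> * normal_density \<mu> \<sigma> (\<mu> + c * t) = normal_density 0 (1 / sqrt 2) t" for t
  proof -
    have "(c * t)\<^sup>2 / (2 * \<sigma>\<^sup>2) = t\<^sup>2" using assms by (simp add: power_mult_distrib c(3))
    moreover have "\<sigma> * sqrt 2 / sqrt (2 * pi * \<sigma>\<^sup>2) = 1 / sqrt pi"
      using assms by (simp add: real_sqrt_mult field_simps)
    moreover have "\<bar>c\<bar> * normal_density \<mu> \<sigma> (\<mu> + c * t) =
        \<sigma> * sqrt 2 / sqrt (2 * pi * \<sigma>\<^sup>2) * exp (- (c * t)\<^sup>2 / (2 * \<sigma>\<^sup>2))"
      unfolding c(2) normal_density_def by simp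
    ultimately show ?thesis
      unfolding normal_density_half_variance by (simp only: minus_divide_left) simp
  qed
  have "(\<integral>\<^sup>+x. indicator {x. \<mu> * x \<le> 0} x * ennreal (normal_density \<mu> \<sigma> x) \<partial>lborel)
     = \<bar>c\<bar> * (\<integral>\<^sup>+t. indicator {x. \<mu> * x \<le> 0} (\<mu> + c * t) *
                     ennreal (normal_density \<mu> \<sigma> (\<mu> + c * t)) \<partial>lborel)"
    by (rule nn_integral_real_affine[OF _ c(1)]) measurable
  also have "\<dots> = (\<integral>\<^sup>+t. ennreal \<bar>c\<bar> * (indicator {x. \<mu> * x \<le> 0} (\<mu> + c * t) *
                     ennreal (normal_density \<mu> \<sigma> (\<mu> + c * t))) \<partial>lborel)"
    by (rule nn_integral_cmult[symmetric]) measurable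
  also have "\<dots> = (\<integral>\<^sup>+t. indicator {\<bar>\<mu>\<bar> / \<sigma> / sqrt 2..} t *
                     ennreal (normal_density 0 (1 / sqrt 2) t) \<partial>lborel)"
    using in_set_iff density_eq
    by (intro nn_integral_cong) (auto simp: indicator_def ennreal_mult[symmetric])
  also have "\<dots> = Q_func (\<bar>\<mu>\<bar> / \<sigma>)" by (simp add: Q_func_nn_integral)
  finally show ?thesis .
qed

text \<open>The likelihood \<open>rx_lik s1sq s2sq \<mu> r\<close> is proportional to \<open>exp (- rx_exponent s1sq s2sq \<mu> r)\<close>,
  and \<open>rx_exponent s1sq s2sq \<mu> \<nu>\<close> measures how well the means \<open>\<mu>\<close> and \<open>\<nu>\<close> are distinguished.\<close>
definition rx_exponent :: "real \<Rightarrow> real \<Rightarrow> real \<times> real \<times> real \<Rightarrow> real \<times> real \<times> real \<Rightarrow> real" where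
  "rx_exponent s1sq s2sq \<mu> r =
     ((fst r - fst \<mu>)\<^sup>2 + (fst (snd r) - fst (snd \<mu>))\<^sup>2) / s1sq + (snd (snd r) - snd (snd \<mu>))\<^sup>2 / (2 * s2sq)"

definition rx_law :: "real \<Rightarrow> real \<Rightarrow> real \<times> real \<times> real \<Rightarrow> (real \<times> real \<times> real) measure" where
  "rx_law s1sq s2sq \<mu> = density lborel (\<lambda>r. ennreal (rx_lik s1sq s2sq \<mu> r))"

lemma borel_measurable_rx_lik [measurable]: "rx_lik s1sq s2sq \<mu> \<in> borel_measurable borel"
  unfolding rx_lik_def[abs_def] borel_prod[symmetric] by measurable

lemma borel_measurable_rx_exponent [measurable]: "rx_exponent s1sq s2sq \<mu> \<in> borel_measurable borel"
  unfolding rx_exponent_def[abs_def] borel_prod[symmetric] by measurable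

lemma sets_rx_law [simp]: "sets (rx_law s1sq s2sq \<mu>) = sets borel"
  by (simp add: rx_law_def)

lemma sets_borel_rx_exponent_le:
  "{r. rx_exponent s1sq s2sq \<nu> r \<le> rx_exponent s1sq s2sq \<mu> r} \<in> sets borel"
  using borel_measurable_le[OF borel_measurable_rx_exponent borel_measurable_rx_exponent] by simp

lemma integral_indicator_rx_lik:
  assumes [measurable]: "A \<in> sets borel"
  shows "(LINT r|lborel. indicator A r * rx_lik s1sq s2sq \<mu> r) = measure (rx_law s1sq s2sq \<mu>) A"
proof -
  have "(LINT r|lborel. indicator A r * rx_lik s1sq s2sq \<mu> r) =
      enn2real (\<integral>\<^sup>+r. ennreal (indicator A r * rx_lik s1sq s2sq \<mu> r) \<partial>lborel)"
    by (rule integral_eq_nn_integral) (measurable, simp add: rx_lik_def)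
  also have "(\<integral>\<^sup>+r. ennreal (indicator A r * rx_lik s1sq s2sq \<mu> r) \<partial>lborel) =
      (\<integral>\<^sup>+r. ennreal (rx_lik s1sq s2sq \<mu> r) * indicator A r \<partial>lborel)"
    by (intro nn_integral_cong) (auto simp: indicator_def)
  also have "\<dots> = emeasure (rx_law s1sq s2sq \<mu>) A"
    using assms unfolding rx_law_def by (subst emeasure_density) auto
  finally show ?thesis by (simp add: measure_def)
qed

context
  fixes s1sq s2sq :: real
  assumes s1sq: "s1sq > 0" and s2sq: "s2sq > 0"
begin

lemma emeasure_rx_law_box:
  assumes [measurable]: "A1 \<in> sets borel" "A2 \<in> sets borel" "A3 \<in> sets borel"
  shows "emeasure (rx_law s1sq s2sq \<mu>) (A1 \<times> A2 \<times> A3) =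
    (\<integral>\<^sup>+x. indicator A1 x * ennreal (normal_density (fst \<mu>) (sqrt (s1sq / 2)) x) \<partial>lborel) *
    (\<integral>\<^sup>+x. indicator A2 x * ennreal (normal_density (fst (snd \<mu>)) (sqrt (s1sq / 2)) x) \<partial>lborel) *
    (\<integral>\<^sup>+x. indicator A3 x * ennreal (normal_density (snd (snd \<mu>)) (sqrt s2sq) x) \<partial>lborel)"
proof -
  define f1 where "f1 x = indicator A1 x * ennreal (normal_density (fst \<mu>) (sqrt (s1sq / 2)) x)" for x
  define f2 where "f2 x = indicator A2 x * ennreal (normal_density (fst (snd \<mu>)) (sqrt (s1sq / 2)) x)" for x
  define f3 where "f3 x = indicator A3 x * ennreal (normal_density (snd (snd \<mu>)) (sqrt s2sq) x)" for x
  have [measurable]: "f1 \<in> borel_measurable borel" "f2 \<in> borel_measurable borel" "f3 \<in> borel_measurable borel"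
    unfolding f1_def[abs_def] f2_def[abs_def] f3_def[abs_def] by measurable
  have "A1 \<times> A2 \<times> A3 \<in> sets (borel \<Otimes>\<^sub>M borel \<Otimes>\<^sub>M borel)" by measurable
  then have [measurable]: "A1 \<times> A2 \<times> A3 \<in> sets borel" unfolding borel_prod .
  have "emeasure (rx_law s1sq s2sq \<mu>) (A1 \<times> A2 \<times> A3) =
      (\<integral>\<^sup>+r. ennreal (rx_lik s1sq s2sq \<mu> r) * indicator (A1 \<times> A2 \<times> A3) r \<partial>lborel)"
    unfolding rx_law_def by (subst emeasure_density) auto
  also have "\<dots> = (\<integral>\<^sup>+r. f1 (fst r) * f2 (fst (snd r)) * f3 (snd (snd r)) \<partial>lborel)"
    by (intro nn_integral_cong)
      (auto simp: rx_lik_def f1_def f2_def f3_def ennreal_mult indicator_def)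
  also have "\<dots> = integral\<^sup>N lborel f1 * integral\<^sup>N lborel f2 * integral\<^sup>N lborel f3"
    by (rule nn_integral_lborel_prod3) measurable
  finally show ?thesis unfolding f1_def f2_def f3_def .
qed

lemma prob_space_rx_law: "prob_space (rx_law s1sq s2sq \<mu>)"
proof
  show "emeasure (rx_law s1sq s2sq \<mu>) (space (rx_law s1sq s2sq \<mu>)) = 1"
    using emeasure_rx_law_box[of UNIV UNIV UNIV \<mu>] s1sq s2sq
    by (simp add: rx_law_def nn_integral_normal_density)
qed

lemma rx_lik_eq_exp:
  "rx_lik s1sq s2sq \<mu> r = exp (- rx_exponent s1sq s2sq \<mu> r) / (pi * s1sq * sqrt (2 * pi * s2sq))"
proof -
  have "(sqrt (s1sq / 2))\<^sup>2 = s1sq / 2" "(sqrt s2sq)\<^sup>2 = s2sq" using s1sq s2sq by auto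
  then show ?thesis
    unfolding rx_lik_def normal_density_def rx_exponent_def
    using s1sq s2sq by (simp add: exp_add[symmetric] exp_diff real_sqrt_mult field_simps)
qed

lemma rx_lik_le_iff:
  "rx_lik s1sq s2sq \<mu> r \<le> rx_lik s1sq s2sq \<nu> r \<longleftrightarrow> rx_exponent s1sq s2sq \<nu> r \<le> rx_exponent s1sq s2sq \<mu> r"
proof -
  have "0 < pi * s1sq * sqrt (2 * pi * s2sq)" using s1sq s2sq by simp
  then show ?thesis by (simp add: rx_lik_eq_exp divide_le_cancel)
qed

lemma measure_rx_law_halfspace_le:
  assumes "T \<ge> 0" and S: "S > 0" "S = (w1\<^sup>2 + w2\<^sup>2) * (s1sq / 2) + w3\<^sup>2 * s2sq"
  shows "measure (rx_law s1sq s2sq \<mu>) {r. T \<le> w1 * (fst r - fst \<mu>) + w2 * (fst (snd r) - fst (snd \<mu>)) +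
                                            w3 * (snd (snd r) - snd (snd \<mu>))}
    \<le> exp (- T\<^sup>2 / (2 * S))"
proof -
  define L where "L r = w1 * (fst r - fst \<mu>) + w2 * (fst (snd r) - fst (snd \<mu>)) + w3 * (snd (snd r) - snd (snd \<mu>))"
    for r :: "real \<times> real \<times> real"
  define A where "A = {r. T \<le> L r}"
  have "{r \<in> space (borel \<Otimes>\<^sub>M borel \<Otimes>\<^sub>M borel). T \<le> L r} \<in> sets (borel \<Otimes>\<^sub>M borel \<Otimes>\<^sub>M borel)"
    unfolding L_def by measurable
  then have [measurable]: "A \<in> sets borel" unfolding A_def borel_prod by simp
  text \<open>Chernoff bound: exponential tilting with the optimal parameter \<open>T / S\<close>.\<close>
  define l where "l = T / S"
  define f1 where "f1 x = exp (l * w1 * (x - fst \<mu>)) * normal_density (fst \<mu>) (sqrt (s1sq / 2)) x" for x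
  define f2 where "f2 x = exp (l * w2 * (x - fst (snd \<mu>))) * normal_density (fst (snd \<mu>)) (sqrt (s1sq / 2)) x" for x
  define f3 where "f3 x = exp (l * w3 * (x - snd (snd \<mu>))) * normal_density (snd (snd \<mu>)) (sqrt s2sq) x" for x
  have [measurable]: "f1 \<in> borel_measurable borel" "f2 \<in> borel_measurable borel" "f3 \<in> borel_measurable borel"
    unfolding f1_def[abs_def] f2_def[abs_def] f3_def[abs_def] by measurable
  have tilt: "ennreal (rx_lik s1sq s2sq \<mu> r) * indicator A r
      \<le> exp (- l * T) * (ennreal (f1 (fst r)) * ennreal (f2 (fst (snd r))) * ennreal (f3 (snd (snd r))))" for r
  proof (cases "r \<in> A")
    case True
    then have "1 \<le> exp (l * (L r - T))" using assms by (simp add: A_def l_def)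
    moreover have "0 \<le> rx_lik s1sq s2sq \<mu> r" by (simp add: rx_lik_def)
    ultimately have "rx_lik s1sq s2sq \<mu> r \<le> exp (l * (L r - T)) * rx_lik s1sq s2sq \<mu> r"
      using mult_right_mono by fastforce
    also have "exp (l * (L r - T)) = exp (- l * T) * (exp (l * w1 * (fst r - fst \<mu>)) *
        exp (l * w2 * (fst (snd r) - fst (snd \<mu>))) * exp (l * w3 * (snd (snd r) - snd (snd \<mu>))))"
      by (simp add: L_def exp_add[symmetric] algebra_simps)
    also have "\<dots> * rx_lik s1sq s2sq \<mu> r = exp (- l * T) * (f1 (fst r) * f2 (fst (snd r)) * f3 (snd (snd r)))"
      by (simp add: f1_def f2_def f3_def rx_lik_def mult_ac)
    finally show ?thesis using True by (simp add: f1_def f2_def f3_def ennreal_mult[symmetric] ennreal_leI)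
  qed simp
  have "emeasure (rx_law s1sq s2sq \<mu>) A = (\<integral>\<^sup>+r. ennreal (rx_lik s1sq s2sq \<mu> r) * indicator A r \<partial>lborel)"
    unfolding rx_law_def by (subst emeasure_density) auto
  also have "\<dots> \<le> (\<integral>\<^sup>+r. exp (- l * T) *
      (ennreal (f1 (fst r)) * ennreal (f2 (fst (snd r))) * ennreal (f3 (snd (snd r)))) \<partial>lborel)"
    by (intro nn_integral_mono tilt)
  also have "\<dots> = exp (- l * T) * ((\<integral>\<^sup>+x. f1 x \<partial>lborel) * (\<integral>\<^sup>+x. f2 x \<partial>lborel) * (\<integral>\<^sup>+x. f3 x \<partial>lborel))"
  proof -
    have "(\<lambda>r. ennreal (f1 (fst r)) * ennreal (f2 (fst (snd r))) * ennreal (f3 (snd (snd r))))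
        \<in> borel_measurable (borel \<Otimes>\<^sub>M borel \<Otimes>\<^sub>M borel)"
      by measurable
    then show ?thesis
      by (subst nn_integral_cmult)
        (simp_all add: borel_prod measurable_lborel1
          nn_integral_lborel_prod3[of "\<lambda>x. ennreal (f1 x)" "\<lambda>x. ennreal (f2 x)" "\<lambda>x. ennreal (f3 x)"])
  qed
  also have "\<dots> = ennreal (exp (- l * T)) * (ennreal (exp ((l * w1)\<^sup>2 * (sqrt (s1sq / 2))\<^sup>2 / 2)) *
      ennreal (exp ((l * w2)\<^sup>2 * (sqrt (s1sq / 2))\<^sup>2 / 2)) * ennreal (exp ((l * w3)\<^sup>2 * (sqrt s2sq)\<^sup>2 / 2)))"
    unfolding f1_def f2_def f3_def using s1sq s2sq by (simp add: nn_integral_exp_times_normal_density)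
  also have "\<dots> = exp (- l * T + l\<^sup>2 * S / 2)"
    using s1sq s2sq by (simp add: ennreal_mult[symmetric] exp_add[symmetric] S(2)
        power_mult_distrib algebra_simps add_divide_distrib)
  also have "- l * T + l\<^sup>2 * S / 2 = - T\<^sup>2 / (2 * S)"
    using S(1) by (simp add: l_def power2_eq_square field_simps)
  finally show ?thesis
    unfolding A_def L_def measure_def by (simp add: enn2real_leI)
qed

lemma measure_rx_law_pairwise_error_le:
  "measure (rx_law s1sq s2sq \<mu>) {r. rx_exponent s1sq s2sq \<nu> r \<le> rx_exponent s1sq s2sq \<mu> r}
    \<le> exp (- rx_exponent s1sq s2sq \<mu> \<nu> / 4)"
proof -
  interpret prob_space "rx_law s1sq s2sq \<mu>" by (rule prob_space_rx_law)
  define K where "K = rx_exponent s1sq s2sq \<mu> \<nu>"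
  show ?thesis
  proof (cases "K = 0")
    case True
    then show ?thesis by (simp add: K_def)
  next
    case False
    then have "K > 0" using s1sq s2sq by (simp add: K_def rx_exponent_def order_less_le)
    define d1 where "d1 = fst \<nu> - fst \<mu>"
    define d2 where "d2 = fst (snd \<nu>) - fst (snd \<mu>)"
    define d3 where "d3 = snd (snd \<nu>) - snd (snd \<mu>)"
    define H where "H = {r. K \<le> 2 * d1 / s1sq * (fst r - fst \<mu>) + 2 * d2 / s1sq * (fst (snd r) - fst (snd \<mu>)) +
                            d3 / s2sq * (snd (snd r) - snd (snd \<mu>))}"
    have exponent_diff: "rx_exponent s1sq s2sq \<nu> r - rx_exponent s1sq s2sq \<mu> r =
        K - (2 * d1 / s1sq * (fst r - fst \<mu>) + 2 * d2 / s1sq * (fst (snd r) - fst (snd \<mu>)) +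
             d3 / s2sq * (snd (snd r) - snd (snd \<mu>)))" for r
      using s1sq s2sq unfolding K_def d1_def d2_def d3_def rx_exponent_def
      by (simp add: field_simps power2_eq_square)
    have "{r. rx_exponent s1sq s2sq \<nu> r \<le> rx_exponent s1sq s2sq \<mu> r} \<subseteq> H"
    proof
      fix r assume "r \<in> {r. rx_exponent s1sq s2sq \<nu> r \<le> rx_exponent s1sq s2sq \<mu> r}"
      then show "r \<in> H" using exponent_diff[of r] unfolding H_def mem_Collect_eq by linarith
    qed
    moreover have "H \<in> sets borel"
    proof -
      have "{r \<in> space (borel \<Otimes>\<^sub>M borel \<Otimes>\<^sub>M borel). r \<in> H} \<in> sets (borel \<Otimes>\<^sub>M borel \<Otimes>\<^sub>M borel)"
        unfolding H_def by measurable
      then show ?thesis unfolding borel_prod by simp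
    qed
    ultimately have "prob {r. rx_exponent s1sq s2sq \<nu> r \<le> rx_exponent s1sq s2sq \<mu> r} \<le> prob H"
      by (intro finite_measure_mono) auto
    also have "\<dots> \<le> exp (- K\<^sup>2 / (2 * (2 * K)))"
    proof (unfold H_def, rule measure_rx_law_halfspace_le)
      show "2 * K = ((2 * d1 / s1sq)\<^sup>2 + (2 * d2 / s1sq)\<^sup>2) * (s1sq / 2) + (d3 / s2sq)\<^sup>2 * s2sq"
        using s1sq s2sq unfolding K_def d1_def d2_def d3_def rx_exponent_def
        by (simp add: field_simps power2_eq_square)
    qed (use \<open>K > 0\<close> in auto)
    also have "- K\<^sup>2 / (2 * (2 * K)) = - K / 4"
      using \<open>K > 0\<close> by (simp add: power2_eq_square)
    finally show ?thesis by (simp add: K_def)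
  qed
qed

lemma measure_rx_law_reflect_fst:
  assumes "x \<noteq> 0"
  shows "measure (rx_law s1sq s2sq (x, y, z)) {r. rx_exponent s1sq s2sq (- x, y, z) r \<le> rx_exponent s1sq s2sq (x, y, z) r}
    = Q_func (\<bar>x\<bar> / sqrt (s1sq / 2))"
proof -
  have "rx_exponent s1sq s2sq (- x, y, z) r - rx_exponent s1sq s2sq (x, y, z) r = 4 * (x * fst r) / s1sq" for r
    unfolding rx_exponent_def by (simp add: diff_divide_distrib[symmetric] power2_eq_square algebra_simps)
  moreover have "4 * (x * fst r) / s1sq \<le> 0 \<longleftrightarrow> x * fst r \<le> 0" for r
    using s1sq by (simp add: divide_le_0_iff)
  ultimately have "rx_exponent s1sq s2sq (- x, y, z) r \<le> rx_exponent s1sq s2sq (x, y, z) r \<longleftrightarrow>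
      x * fst r \<le> 0" for r
    by (metis diff_le_0_iff_le)
  then have "{r. rx_exponent s1sq s2sq (- x, y, z) r \<le> rx_exponent s1sq s2sq (x, y, z) r} = {a. x * a \<le> 0} \<times> UNIV \<times> UNIV"
    by auto
  moreover have "emeasure (rx_law s1sq s2sq (x, y, z)) ({a. x * a \<le> 0} \<times> UNIV \<times> UNIV) =
      Q_func (\<bar>x\<bar> / sqrt (s1sq / 2))"
    using emeasure_rx_law_box[of "{a. x * a \<le> 0}" UNIV UNIV "(x, y, z)"] assms s1sq s2sq
    by (simp add: nn_integral_normal_density nn_integral_normal_density_sign_flip)
  ultimately show ?thesis by (simp add: measure_def Q_func_nonneg)
qed

lemma measure_rx_law_reflect_snd:
  assumes "y \<noteq> 0"
  shows "measure (rx_law s1sq s2sq (x, y, z)) {r. rx_exponent s1sq s2sq (x, - y, z) r \<le> rx_exponent s1sq s2sq (x, y, z) r}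
    = Q_func (\<bar>y\<bar> / sqrt (s1sq / 2))"
proof -
  have "rx_exponent s1sq s2sq (x, - y, z) r - rx_exponent s1sq s2sq (x, y, z) r = 4 * (y * fst (snd r)) / s1sq" for r
    unfolding rx_exponent_def by (simp add: diff_divide_distrib[symmetric] power2_eq_square algebra_simps)
  moreover have "4 * (y * fst (snd r)) / s1sq \<le> 0 \<longleftrightarrow> y * fst (snd r) \<le> 0" for r
    using s1sq by (simp add: divide_le_0_iff)
  ultimately have "rx_exponent s1sq s2sq (x, - y, z) r \<le> rx_exponent s1sq s2sq (x, y, z) r \<longleftrightarrow>
      y * fst (snd r) \<le> 0" for r
    by (metis diff_le_0_iff_le)
  then have "{r. rx_exponent s1sq s2sq (x, - y, z) r \<le> rx_exponent s1sq s2sq (x, y, z) r} = UNIV \<times> {a. y * a \<le> 0} \<times> UNIV"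
    by auto
  moreover have "emeasure (rx_law s1sq s2sq (x, y, z)) (UNIV \<times> {a. y * a \<le> 0} \<times> UNIV) =
      Q_func (\<bar>y\<bar> / sqrt (s1sq / 2))"
    using emeasure_rx_law_box[of UNIV "{a. y * a \<le> 0}" UNIV "(x, y, z)"] assms s1sq s2sq
    by (simp add: nn_integral_normal_density nn_integral_normal_density_sign_flip)
  ultimately show ?thesis by (simp add: measure_def Q_func_nonneg)
qed

end

lemma qam_amps_eq_image:
  assumes "even m"
  shows "qam_amps m = (\<lambda>k. 2 * k + 1 - int m) ` {0..<int m}"
proof safe
  fix a assume "a \<in> qam_amps m"
  then have a: "odd a" "\<bar>a\<bar> \<le> int m - 1" by (auto simp: qam_amps_def)
  obtain j where j: "m = 2 * j" using assms by auto
  obtain i where i: "a = 2 * i + 1" using a(1) by (metis oddE)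
  show "a \<in> (\<lambda>k. 2 * k + 1 - int m) ` {0..<int m}"
  proof
    show "a = 2 * (i + int j) + 1 - int m" using i j by simp
    show "i + int j \<in> {0..<int m}" using a(2) i j by auto
  qed
next
  fix k assume "k \<in> {0..<int m}"
  then show "2 * k + 1 - int m \<in> qam_amps m" using assms by (auto simp: qam_amps_def)
qed

lemma finite_qam_amps: "even m \<Longrightarrow> finite (qam_amps m)"
  by (simp add: qam_amps_eq_image)

lemma card_qam_amps: "even m \<Longrightarrow> card (qam_amps m) = m"
  by (simp add: qam_amps_eq_image card_image inj_on_def)

lemma finite_qam_symbols: "even m \<Longrightarrow> finite (qam_symbols m)"
  by (simp add: qam_symbols_def finite_qam_amps)

lemma card_qam_symbols: "even m \<Longrightarrow> card (qam_symbols m) = m\<^sup>2"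
  by (simp add: qam_symbols_def card_cartesian_product card_qam_amps power2_eq_square)

lemma qam_symbols_reflect:
  assumes "(a, b) \<in> qam_symbols m"
  shows "(- a, b) \<in> qam_symbols m" "(a, - b) \<in> qam_symbols m" "(- a, - b) \<in> qam_symbols m"
  using assms by (auto simp: qam_symbols_def qam_amps_def)

lemma qam_symbols_odd: "s \<in> qam_symbols m \<Longrightarrow> odd (fst s) \<and> odd (snd s)"
  by (auto simp: qam_symbols_def qam_amps_def)

text \<open>The mirror images of a symbol across an adjacent axis are its only nearest neighbours of the same
  energy; they dominate the error rate.\<close>
definition axis_neighbours :: "int \<times> int \<Rightarrow> real" where
  "axis_neighbours s = (if \<bar>fst s\<bar> = 1 then 1 else 0) + (if \<bar>snd s\<bar> = 1 then 1 else 0)"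

lemma sum_axis_neighbours:
  assumes "even m" "m > 0"
  shows "(\<Sum>s\<in>qam_symbols m. axis_neighbours s) = 4 * real m"
proof -
  let ?g = "\<lambda>a::int. if \<bar>a\<bar> = 1 then 1 else 0 :: real"
  have "{a \<in> qam_amps m. \<bar>a\<bar> = 1} = {-1, 1}"
    using assms by (auto simp: qam_amps_def)
  then have g: "(\<Sum>a\<in>qam_amps m. ?g a) = 2"
    using sum.inter_filter[OF finite_qam_amps[OF assms(1)], of "\<lambda>_. 1::real" "\<lambda>a. \<bar>a\<bar> = 1"] by simp
  have "(\<Sum>s\<in>qam_symbols m. axis_neighbours s) = (\<Sum>a\<in>qam_amps m. \<Sum>b\<in>qam_amps m. ?g a + ?g b)"
    unfolding qam_symbols_def axis_neighbours_def by (simp add: sum.cartesian_product case_prod_beta)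
  also have "\<dots> = 4 * real m"
    using assms by (simp add: sum.distrib g card_qam_amps sum_distrib_left[symmetric])
  finally show ?thesis .
qed

lemma odd_square_ge_9:
  fixes a :: int
  assumes "odd a" "\<bar>a\<bar> \<noteq> 1"
  shows "a\<^sup>2 \<ge> 9"
proof -
  have "\<bar>a\<bar> \<ge> 3"
  proof (rule ccontr)
    assume "\<not> \<bar>a\<bar> \<ge> 3"
    then have "a \<in> {-2, -1, 0, 1, 2}" by auto
    then show False using assms by auto
  qed
  then have "\<bar>a\<bar> * \<bar>a\<bar> \<ge> 3 * 3" by (intro mult_mono) auto
  then show ?thesis by (simp add: power2_eq_square)
qed

lemma even_nonzero_square_ge_4:
  fixes d :: int
  assumes "even d" "d \<noteq> 0"
  shows "d\<^sup>2 \<ge> 4"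
proof -
  have "\<bar>d\<bar> \<ge> 2"
  proof (rule ccontr)
    assume "\<not> \<bar>d\<bar> \<ge> 2"
    then have "d \<in> {-1, 0, 1}" by auto
    then show False using assms by auto
  qed
  then have "\<bar>d\<bar> * \<bar>d\<bar> \<ge> 2 * 2" by (intro mult_mono) auto
  then show ?thesis by (simp add: power2_eq_square)
qed

lemma odd_points_same_norm_dist_ge_8:
  fixes s1 s2 t1 t2 :: int
  assumes odd: "odd s1" "odd s2" "odd t1" "odd t2"
    and same_norm: "s1\<^sup>2 + s2\<^sup>2 = t1\<^sup>2 + t2\<^sup>2"
    and "(t1, t2) \<noteq> (s1, s2)"
    and "\<not> (t1 = - s1 \<and> t2 = s2 \<and> \<bar>s1\<bar> = 1)"
    and "\<not> (t1 = s1 \<and> t2 = - s2 \<and> \<bar>s2\<bar> = 1)"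
  shows "(t1 - s1)\<^sup>2 + (t2 - s2)\<^sup>2 \<ge> 8"
proof (cases "t1 = s1 \<or> t2 = s2")
  case True
  then consider "t1 = s1" "t2 = - s2" "\<bar>s2\<bar> \<noteq> 1" | "t2 = s2" "t1 = - s1" "\<bar>s1\<bar> \<noteq> 1"
    using same_norm assms(6-8) by (auto simp: power2_eq_iff)
  then show ?thesis
  proof cases
    case 1
    then show ?thesis using odd_square_ge_9[of s2] odd by (simp add: power2_eq_square algebra_simps)
  next
    case 2
    then show ?thesis using odd_square_ge_9[of s1] odd by (simp add: power2_eq_square algebra_simps)
  qed
next
  case False
  then show ?thesis using even_nonzero_square_ge_4[of "t1 - s1"] even_nonzero_square_ge_4[of "t2 - s2"] odd
    by simp
qed

definition qam_point :: "real \<Rightarrow> real \<Rightarrow> int \<times> int \<Rightarrow> real \<times> real \<times> real" where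
  "qam_point a b s = (a * of_int (fst s), a * of_int (snd s), b * ((of_int (fst s))\<^sup>2 + (of_int (snd s))\<^sup>2))"

lemma rx_mean_eq_qam_point:
  "rx_mean M \<Theta>1 \<Theta>2 P = qam_point (qam_k1 M * sqrt (\<Theta>1 * P)) ((qam_k1 M)\<^sup>2 * sqrt \<Theta>2 * P)"
  by (simp add: fun_eq_iff rx_mean_def qam_point_def)

definition qam_error_event ::
  "real \<Rightarrow> real \<Rightarrow> real \<Rightarrow> real \<Rightarrow> nat \<Rightarrow> int \<times> int \<Rightarrow> (real \<times> real \<times> real) set" where
  "qam_error_event a b s1sq s2sq m s =
     (\<Union>t\<in>qam_symbols m - {s}. {r. rx_exponent s1sq s2sq (qam_point a b t) r \<le> rx_exponent s1sq s2sq (qam_point a b s) r})"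

lemma ml_cond_error_eq_measure:
  fixes M m :: nat and \<Theta>1 \<Theta>2 P :: real
  assumes "even m" "s1sq > 0" "s2sq > 0"
  defines "a \<equiv> qam_k1 M * sqrt (\<Theta>1 * P)" and "b \<equiv> (qam_k1 M)\<^sup>2 * sqrt \<Theta>2 * P"
  shows "ml_cond_error M m \<Theta>1 \<Theta>2 s1sq s2sq P s =
    measure (rx_law s1sq s2sq (qam_point a b s)) (qam_error_event a b s1sq s2sq m s)"
proof -
  have "ml_error_region M m \<Theta>1 \<Theta>2 s1sq s2sq P s = qam_error_event a b s1sq s2sq m s"
    using assms(2,3) unfolding ml_error_region_def qam_error_event_def a_def b_def
    by (auto simp: rx_mean_eq_qam_point rx_lik_le_iff)
  moreover have "qam_error_event a b s1sq s2sq m s \<in> sets borel"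
    unfolding qam_error_event_def
    using finite_qam_symbols[OF assms(1)] by (intro sets.finite_UN) (auto simp: sets_borel_rx_exponent_le)
  ultimately show ?thesis
    unfolding ml_cond_error_def using integral_indicator_rx_lik
    by (simp add: a_def b_def rx_mean_eq_qam_point)
qed

lemma rx_exponent_qam_point:
  "rx_exponent s1sq s2sq (qam_point a b s) (qam_point a b t) =
    a\<^sup>2 * of_int ((fst t - fst s)\<^sup>2 + (snd t - snd s)\<^sup>2) / s1sq +
    (b * of_int ((fst t)\<^sup>2 + (snd t)\<^sup>2 - ((fst s)\<^sup>2 + (snd s)\<^sup>2)))\<^sup>2 / (2 * s2sq)"
  by (simp add: rx_exponent_def qam_point_def power2_eq_square algebra_simps)

lemma rx_exponent_qam_point_reflect_both:
  "rx_exponent s1sq s2sq (qam_point a b (- x, - y)) r - rx_exponent s1sq s2sq (qam_point a b (x, y)) r =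
    (rx_exponent s1sq s2sq (qam_point a b (- x, y)) r - rx_exponent s1sq s2sq (qam_point a b (x, y)) r) +
    (rx_exponent s1sq s2sq (qam_point a b (x, - y)) r - rx_exponent s1sq s2sq (qam_point a b (x, y)) r)"
  by (simp add: rx_exponent_def qam_point_def add_divide_distrib diff_divide_distrib power2_eq_square algebra_simps)

context
  fixes a b s1sq s2sq :: real and m :: nat
  assumes a: "a > 0" and s1sq: "s1sq > 0" and s2sq: "s2sq > 0" and m: "even m"
    and energy_gap: "8 * a\<^sup>2 / s1sq \<le> b\<^sup>2 / (2 * s2sq)"
  \<comment> \<open>Symbols of different energy are then at least as well separated through Y2 as the far
    symbols of equal energy are through Y1; this holds for large P since b grows like P and a like
    sqrt P.\<close>
begin

abbreviation (input) "law s \<equiv> rx_law s1sq s2sq (qam_point a b s)"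
abbreviation (input) "pair_event s t \<equiv>
  {r. rx_exponent s1sq s2sq (qam_point a b t) r \<le> rx_exponent s1sq s2sq (qam_point a b s) r}"
abbreviation (input) "Q_near \<equiv> Q_func (sqrt 2 * a / sqrt s1sq)"
abbreviation (input) "far_bound \<equiv> exp (- 2 * a\<^sup>2 / s1sq)"

lemma amp_div_sqrt_half: "a / sqrt (s1sq / 2) = sqrt 2 * a / sqrt s1sq"
  using s1sq by (simp add: real_sqrt_divide field_simps)

lemma measure_pair_event_mirror_fst:
  assumes "\<bar>fst s\<bar> = 1"
  shows "measure (law s) (pair_event s (- fst s, snd s)) = Q_near"
  using measure_rx_law_reflect_fst[OF s1sq s2sq, of "a * of_int (fst s)" "a * of_int (snd s)"] assms a
  by (simp add: qam_point_def abs_mult amp_div_sqrt_half flip: of_int_abs)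

lemma measure_pair_event_mirror_snd:
  assumes "\<bar>snd s\<bar> = 1"
  shows "measure (law s) (pair_event s (fst s, - snd s)) = Q_near"
  using measure_rx_law_reflect_snd[OF s1sq s2sq, of "a * of_int (snd s)" "a * of_int (fst s)"] assms a
  by (simp add: qam_point_def abs_mult amp_div_sqrt_half flip: of_int_abs)

lemma rx_exponent_qam_point_far:
  assumes "s \<in> qam_symbols m" "t \<in> qam_symbols m" "t \<noteq> s"
    and "\<not> (t = (- fst s, snd s) \<and> \<bar>fst s\<bar> = 1)" "\<not> (t = (fst s, - snd s) \<and> \<bar>snd s\<bar> = 1)"
  shows "8 * a\<^sup>2 / s1sq \<le> rx_exponent s1sq s2sq (qam_point a b s) (qam_point a b t)"
proof -
  define d where "d = (fst t - fst s)\<^sup>2 + (snd t - snd s)\<^sup>2"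
  define \<Delta> where "\<Delta> = (fst t)\<^sup>2 + (snd t)\<^sup>2 - ((fst s)\<^sup>2 + (snd s)\<^sup>2)"
  have exponent: "rx_exponent s1sq s2sq (qam_point a b s) (qam_point a b t) =
      a\<^sup>2 * of_int d / s1sq + (b * of_int \<Delta>)\<^sup>2 / (2 * s2sq)"
    by (simp add: rx_exponent_qam_point d_def \<Delta>_def)
  show ?thesis
  proof (cases "\<Delta> = 0")
    case True
    have "d \<ge> 8"
      unfolding d_def using True assms qam_symbols_odd[of s m] qam_symbols_odd[of t m]
      by (intro odd_points_same_norm_dist_ge_8) (auto simp: \<Delta>_def prod_eq_iff)
    then have "a\<^sup>2 * 8 / s1sq \<le> a\<^sup>2 * of_int d / s1sq"
      using s1sq by (intro divide_right_mono mult_left_mono) auto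
    then show ?thesis using True by (simp add: exponent mult.commute)
  next
    case False
    then have "1 \<le> \<Delta>\<^sup>2" by (simp add: int_one_le_iff_zero_less)
    then have "(1::real) \<le> (of_int \<Delta>)\<^sup>2" by (metis of_int_1 of_int_le_iff of_int_power)
    then have "b\<^sup>2 * 1 \<le> b\<^sup>2 * (of_int \<Delta>)\<^sup>2" by (intro mult_left_mono) auto
    then have "b\<^sup>2 / (2 * s2sq) \<le> (b * of_int \<Delta>)\<^sup>2 / (2 * s2sq)"
      using s2sq by (intro divide_right_mono) (auto simp: power_mult_distrib)
    moreover have "0 \<le> a\<^sup>2 * of_int d / s1sq" unfolding d_def using s1sq by simp
    ultimately show ?thesis using energy_gap by (simp add: exponent)
  qed
qed

lemma measure_pair_event_far:
  assumes "s \<in> qam_symbols m" "t \<in> qam_symbols m" "t \<noteq> s"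
    and "\<not> (t = (- fst s, snd s) \<and> \<bar>fst s\<bar> = 1)" "\<not> (t = (fst s, - snd s) \<and> \<bar>snd s\<bar> = 1)"
  shows "measure (law s) (pair_event s t) \<le> far_bound"
proof -
  have "measure (law s) (pair_event s t) \<le> exp (- rx_exponent s1sq s2sq (qam_point a b s) (qam_point a b t) / 4)"
    by (rule measure_rx_law_pairwise_error_le[OF s1sq s2sq])
  also have "\<dots> \<le> far_bound"
    using rx_exponent_qam_point_far[OF assms] by simp
  finally show ?thesis .
qed

lemma measure_error_event_le:
  assumes s: "s \<in> qam_symbols m"
  shows "measure (law s) (qam_error_event a b s1sq s2sq m s) \<le> axis_neighbours s * Q_near + m\<^sup>2 * far_bound"
proof -
  interpret prob_space "law s" by (rule prob_space_rx_law[OF s1sq s2sq])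
  let ?S = "qam_symbols m"
  let ?p = "\<lambda>t. measure (law s) (pair_event s t)"
  let ?nx = "(- fst s, snd s)" and ?ny = "(fst s, - snd s)"
  define N where "N = (if \<bar>fst s\<bar> = 1 then {?nx} else {}) \<union> (if \<bar>snd s\<bar> = 1 then {?ny} else {})"
  have nonzero: "fst s \<noteq> 0" "snd s \<noteq> 0" using qam_symbols_odd[OF s] by auto
  have "N \<subseteq> ?S - {s}"
    using qam_symbols_reflect[of "fst s" "snd s"] s nonzero by (auto simp: N_def prod_eq_iff)
  have "measure (law s) (qam_error_event a b s1sq s2sq m s) \<le> (\<Sum>t\<in>?S - {s}. ?p t)"
    unfolding qam_error_event_def using finite_qam_symbols[OF m]
    by (intro finite_measure_subadditive_finite) (auto simp: sets_borel_rx_exponent_le)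
  also have "\<dots> = (\<Sum>t\<in>N. ?p t) + (\<Sum>t\<in>(?S - {s}) - N. ?p t)"
    using \<open>N \<subseteq> ?S - {s}\<close> finite_qam_symbols[OF m] by (subst sum.subset_diff) auto
  also have "(\<Sum>t\<in>N. ?p t) = axis_neighbours s * Q_near"
    using nonzero measure_pair_event_mirror_fst measure_pair_event_mirror_snd
    by (auto simp: N_def axis_neighbours_def)
  also have "(\<Sum>t\<in>(?S - {s}) - N. ?p t) \<le> (\<Sum>t\<in>(?S - {s}) - N. far_bound)"
    using s by (intro sum_mono measure_pair_event_far) (auto simp: N_def)
  also have "\<dots> \<le> m\<^sup>2 * far_bound"
    using card_mono[OF finite_qam_symbols[OF m], of "?S - {s} - N"] card_qam_symbols[OF m]
    by (auto intro!: mult_right_mono simp flip: of_nat_power)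
  finally show ?thesis by simp
qed

text \<open>The overlap of the two mirror events lies in the pairwise event of the diagonally opposite
  symbol, which is far away.\<close>
lemma measure_mirror_events_overlap_le:
  assumes s: "s \<in> qam_symbols m"
  shows "measure (law s) (pair_event s (- fst s, snd s) \<inter> pair_event s (fst s, - snd s)) \<le> far_bound"
proof -
  interpret prob_space "law s" by (rule prob_space_rx_law[OF s1sq s2sq])
  let ?nx = "(- fst s, snd s)" and ?ny = "(fst s, - snd s)" and ?d = "(- fst s, - snd s)"
  have nonzero: "fst s \<noteq> 0" "snd s \<noteq> 0" using qam_symbols_odd[OF s] by auto
  have "pair_event s ?nx \<inter> pair_event s ?ny \<subseteq> pair_event s ?d"
  proof
    fix r assume "r \<in> pair_event s ?nx \<inter> pair_event s ?ny"
    then show "r \<in> pair_event s ?d"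
      using rx_exponent_qam_point_reflect_both[of s1sq s2sq a b "fst s" "snd s" r]
      by (simp only: mem_Collect_eq Int_iff prod.collapse) linarith
  qed
  then have "measure (law s) (pair_event s ?nx \<inter> pair_event s ?ny) \<le> measure (law s) (pair_event s ?d)"
    by (intro finite_measure_mono) (auto simp: sets_borel_rx_exponent_le)
  also have "\<dots> \<le> far_bound"
    using s nonzero qam_symbols_reflect[of "fst s" "snd s"]
    by (intro measure_pair_event_far) (auto simp: prod_eq_iff)
  finally show ?thesis .
qed

lemma measure_error_event_ge:
  assumes s: "s \<in> qam_symbols m"
  shows "axis_neighbours s * Q_near - far_bound \<le> measure (law s) (qam_error_event a b s1sq s2sq m s)"
proof -
  interpret prob_space "law s" by (rule prob_space_rx_law[OF s1sq s2sq])
  let ?E = "qam_error_event a b s1sq s2sq m s"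
  let ?nx = "(- fst s, snd s)" and ?ny = "(fst s, - snd s)"
  have nonzero: "fst s \<noteq> 0" "snd s \<noteq> 0" using qam_symbols_odd[OF s] by auto
  have reflections: "?nx \<in> qam_symbols m" "?ny \<in> qam_symbols m"
    using qam_symbols_reflect[of "fst s" "snd s"] s by auto
  have [measurable]: "pair_event s t \<in> sets (law s)" for t
    by (simp add: sets_borel_rx_exponent_le)
  have "?E \<in> sets (law s)"
    unfolding qam_error_event_def using finite_qam_symbols[OF m] by (intro sets.finite_UN) auto
  have mirrors_in_E: "pair_event s ?nx \<subseteq> ?E" "pair_event s ?ny \<subseteq> ?E"
    unfolding qam_error_event_def using reflections nonzero by (auto simp: prod_eq_iff intro!: bexI)
  then have mirror_le_E: "measure (law s) (pair_event s ?nx) \<le> measure (law s) ?E"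
    "measure (law s) (pair_event s ?ny) \<le> measure (law s) ?E"
    using \<open>?E \<in> sets (law s)\<close> by (auto intro: finite_measure_mono)
  consider "\<bar>fst s\<bar> = 1" "\<bar>snd s\<bar> = 1" | "\<bar>fst s\<bar> = 1" "\<bar>snd s\<bar> \<noteq> 1" | "\<bar>fst s\<bar> \<noteq> 1" "\<bar>snd s\<bar> = 1"
    | "\<bar>fst s\<bar> \<noteq> 1" "\<bar>snd s\<bar> \<noteq> 1"
    by blast
  then show ?thesis
  proof cases
    case 1
    have "measure (law s) (pair_event s ?nx \<inter> pair_event s ?ny) \<le> far_bound"
      by (rule measure_mirror_events_overlap_le[OF s])
    moreover have "measure (law s) (pair_event s ?nx \<union> pair_event s ?ny) \<le> measure (law s) ?E"
      using \<open>?E \<in> sets (law s)\<close> mirrors_in_E by (intro finite_measure_mono) auto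
    moreover have "measure (law s) (pair_event s ?nx \<union> pair_event s ?ny) =
        measure (law s) (pair_event s ?nx) + measure (law s) (pair_event s ?ny) -
        measure (law s) (pair_event s ?nx \<inter> pair_event s ?ny)"
      by (rule measure_Un3) (auto simp: fmeasurable_eq_sets)
    ultimately show ?thesis
      using 1 measure_pair_event_mirror_fst measure_pair_event_mirror_snd by (simp add: axis_neighbours_def)
  next
    case 2
    then have "axis_neighbours s * Q_near = measure (law s) (pair_event s ?nx)"
      using measure_pair_event_mirror_fst by (simp add: axis_neighbours_def)
    then show ?thesis using mirror_le_E(1) exp_gt_zero[of "- 2 * a\<^sup>2 / s1sq"] by linarith
  next
    case 3
    then have "axis_neighbours s * Q_near = measure (law s) (pair_event s ?ny)"
      using measure_pair_event_mirror_snd by (simp add: axis_neighbours_def)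
    then show ?thesis using mirror_le_E(2) exp_gt_zero[of "- 2 * a\<^sup>2 / s1sq"] by linarith
  next
    case 4
    then have "axis_neighbours s * Q_near = 0" by (simp add: axis_neighbours_def)
    then show ?thesis using measure_nonneg[of "law s" ?E] exp_gt_zero[of "- 2 * a\<^sup>2 / s1sq"] by linarith
  qed
qed

lemma average_error_estimate:
  assumes "m > 0"
  shows "\<bar>(\<Sum>s\<in>qam_symbols m. measure (law s) (qam_error_event a b s1sq s2sq m s)) / m\<^sup>2 - 4 / m * Q_near\<bar>
    \<le> m\<^sup>2 * far_bound"
proof -
  let ?S = "qam_symbols m"
  let ?c = "\<lambda>s. measure (law s) (qam_error_event a b s1sq s2sq m s)"
  have neighbours: "(\<Sum>s\<in>?S. axis_neighbours s * Q_near) = 4 * m * Q_near"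
    using sum_axis_neighbours[OF m assms] by (simp add: sum_distrib_right[symmetric])
  have "(\<Sum>s\<in>?S. ?c s) \<le> (\<Sum>s\<in>?S. axis_neighbours s * Q_near + m\<^sup>2 * far_bound)"
    by (intro sum_mono measure_error_event_le)
  also have "\<dots> = 4 * m * Q_near + m\<^sup>2 * (m\<^sup>2 * far_bound)"
    by (simp add: sum.distrib neighbours card_qam_symbols[OF m])
  finally have upper: "(\<Sum>s\<in>?S. ?c s) / m\<^sup>2 - 4 / m * Q_near \<le> m\<^sup>2 * far_bound"
    using assms by (simp add: field_simps power2_eq_square)
  have "4 * m * Q_near - m\<^sup>2 * far_bound = (\<Sum>s\<in>?S. axis_neighbours s * Q_near - far_bound)"
    by (simp add: sum_subtractf neighbours card_qam_symbols[OF m])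
  also have "\<dots> \<le> (\<Sum>s\<in>?S. ?c s)"
    by (intro sum_mono measure_error_event_ge)
  finally have "- far_bound \<le> (\<Sum>s\<in>?S. ?c s) / m\<^sup>2 - 4 / m * Q_near"
    using assms by (simp add: field_simps power2_eq_square)
  moreover have "far_bound \<le> m\<^sup>2 * far_bound"
    using assms by (simp add: mult_le_cancel_right1)
  ultimately show ?thesis using upper by linarith
qed

end

lemma asymp_equiv_of_gaussian_error:
  fixes f g X :: "'a \<Rightarrow> real"
  assumes X: "filterlim X at_top F" and "D > 0"
    and error: "eventually (\<lambda>x. \<bar>f x - g x\<bar> \<le> C * exp (- (X x)\<^sup>2)) F"
    and lower: "eventually (\<lambda>x. D * exp (- (X x / sqrt 2 + 1)\<^sup>2) \<le> g x) F"
  shows "f \<sim>[F] g"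
proof -
  define h where "h y = exp (- y\<^sup>2 / 2 + sqrt 2 * y + 1)" for y :: real
  have "(h \<longlongrightarrow> 0) at_top" unfolding h_def by real_asymp
  then have h_lim: "((\<lambda>x. C / D * h (X x)) \<longlongrightarrow> 0) F"
    by (intro tendsto_mult_right_zero filterlim_compose[OF _ X])
  have "eventually (\<lambda>x. norm (f x / g x - 1) \<le> C / D * h (X x)) F"
    using error lower
  proof eventually_elim
    case (elim x)
    have "0 < D * exp (- (X x / sqrt 2 + 1)\<^sup>2)" using \<open>D > 0\<close> by simp
    then have "g x > 0" using elim(2) by linarith
    have "norm (f x / g x - 1) = \<bar>f x - g x\<bar> / g x"
    proof -
      have "f x / g x - 1 = (f x - g x) / g x" using \<open>g x > 0\<close> by (simp add: field_simps)
      then show ?thesis using \<open>g x > 0\<close> by (simp add: abs_divide)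
    qed
    also have "\<dots> \<le> C * exp (- (X x)\<^sup>2) / (D * exp (- (X x / sqrt 2 + 1)\<^sup>2))"
      using elim \<open>0 < D * exp _\<close> by (intro frac_le) auto
    also have "\<dots> = C / D * exp (- (X x)\<^sup>2 - (- (X x / sqrt 2 + 1)\<^sup>2))"
      unfolding exp_diff by simp
    also have "- (X x)\<^sup>2 - (- (X x / sqrt 2 + 1)\<^sup>2) = - (X x)\<^sup>2 / 2 + sqrt 2 * X x + 1"
      by (simp add: power2_eq_square field_simps)
    finally show ?case by (simp add: h_def)
  qed
  then have "((\<lambda>x. f x / g x - 1) \<longlongrightarrow> 0) F"
    by (rule Lim_null_comparison[OF _ h_lim])
  then show ?thesis
    by (intro asymp_equivI') (rule LIM_zero_cancel)
qed

lemma qam_Pe_asymp_equiv: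
  fixes M m :: nat and \<Theta>1 \<Theta>2 s1sq s2sq :: real
  assumes M: "M = m\<^sup>2" and m: "even m" "m > 0"
    and pos: "\<Theta>1 > 0" "\<Theta>2 > 0" "s1sq > 0" "s2sq > 0"
  shows "(\<lambda>P. qam_Pe M m \<Theta>1 \<Theta>2 s1sq s2sq P) \<sim>[at_top]
         (\<lambda>P. 4 / sqrt (real M) * Q_func (sqrt 2 * (qam_k1 M * sqrt (\<Theta>1 * P)) / sqrt s1sq))"
proof -
  define k where "k = qam_k1 M"
  have "m \<ge> 2" using m by presburger
  then have "M \<ge> 4" using mult_le_mono[OF \<open>m \<ge> 2\<close> \<open>m \<ge> 2\<close>] by (simp add: M power2_eq_square)
  then have "k > 0" by (simp add: k_def qam_k1_def)
  define a where "a P = k * sqrt (\<Theta>1 * P)" for P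
  define b where "b P = k\<^sup>2 * sqrt \<Theta>2 * P" for P
  define X where "X P = sqrt 2 * a P / sqrt s1sq" for P
  have X_lim: "filterlim X at_top at_top"
    unfolding X_def a_def using \<open>k > 0\<close> pos by real_asymp
  have energy_gap: "eventually (\<lambda>P. 8 * (a P)\<^sup>2 / s1sq \<le> (b P)\<^sup>2 / (2 * s2sq)) at_top"
    unfolding a_def b_def using \<open>k > 0\<close> pos by real_asymp
  have error: "eventually (\<lambda>P. \<bar>qam_Pe M m \<Theta>1 \<Theta>2 s1sq s2sq P - 4 / sqrt (real M) * Q_func (X P)\<bar>
      \<le> M * exp (- (X P)\<^sup>2)) at_top"
    using energy_gap eventually_gt_at_top[of 0]
  proof eventually_elim
    case (elim P)
    have "a P > 0" using elim(2) \<open>k > 0\<close> pos by (simp add: a_def)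
    have "qam_Pe M m \<Theta>1 \<Theta>2 s1sq s2sq P =
        (\<Sum>s\<in>qam_symbols m. measure (rx_law s1sq s2sq (qam_point (a P) (b P) s))
           (qam_error_event (a P) (b P) s1sq s2sq m s)) / m\<^sup>2"
      using m pos unfolding qam_Pe_def M a_def b_def k_def
      by (simp add: ml_cond_error_eq_measure)
    moreover have "(X P)\<^sup>2 = 2 * (a P)\<^sup>2 / s1sq" using pos by (simp add: X_def power_divide power_mult_distrib)
    ultimately show ?case
      using average_error_estimate[OF \<open>a P > 0\<close> pos(3,4) m(1) elim(1) m(2)]
      by (simp add: X_def M)
  qed
  have lower: "eventually (\<lambda>P. 4 / (m * sqrt pi) * exp (- (X P / sqrt 2 + 1)\<^sup>2)
      \<le> 4 / sqrt (real M) * Q_func (X P)) at_top"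
    using eventually_ge_at_top[of 0]
  proof eventually_elim
    case (elim P)
    then have "X P \<ge> 0" using \<open>k > 0\<close> pos by (simp add: X_def a_def)
    then show ?case
      using Q_func_lower_bound[of "X P"] m(2) by (simp add: M field_simps)
  qed
  have "(\<lambda>P. qam_Pe M m \<Theta>1 \<Theta>2 s1sq s2sq P) \<sim>[at_top] (\<lambda>P. 4 / sqrt (real M) * Q_func (X P))"
    using m(2) by (intro asymp_equiv_of_gaussian_error[OF X_lim _ error lower]) simp
  then show ?thesis by (simp add: X_def a_def k_def)
qed

theorem proposition6:
  fixes M m K :: nat and h :: "nat \<Rightarrow> complex" and \<rho> :: "nat \<Rightarrow> real"
    and s1sq s2sq :: real
  assumes "M = m ^ 2" and "even m" and "m > 0"
    and "K \<ge> 1"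
    and "\<forall>k\<in>{1..K}. h k \<noteq> 0"
    and "\<forall>k\<in>{1..K}. 0 \<le> \<rho> k \<and> \<rho> k \<le> 1"
    and "\<exists>k\<in>{1..K}. \<rho> k \<noteq> 0"
    and "\<exists>k\<in>{1..K}. \<rho> k \<noteq> 1"
    and "s1sq > 0" and "s2sq > 0"
  defines "\<Theta>1 \<equiv> \<Sum>k=1..K. \<rho> k * (cmod (h k))\<^sup>2"
    and "\<Theta>2 \<equiv> \<Sum>k=1..K. (1 - \<rho> k)\<^sup>2 * (cmod (h k)) ^ 4"
  shows "(\<lambda>P. qam_Pe M m \<Theta>1 \<Theta>2 s1sq s2sq P) \<sim>[at_top]
         (\<lambda>P. 4 / sqrt (real M) * Q_func (sqrt 2 * (qam_k1 M * sqrt (\<Theta>1 * P)) / sqrt s1sq))"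
proof (rule qam_Pe_asymp_equiv)
  obtain k where k: "k \<in> {1..K}" "\<rho> k \<noteq> 0" using assms(7) by blast
  then have "0 < \<rho> k * (cmod (h k))\<^sup>2" using assms(5,6) by (auto simp: less_le)
  then show "\<Theta>1 > 0" unfolding \<Theta>1_def using k(1) assms(6) by (intro sum_pos2[of _ k]) auto
next
  obtain k where k: "k \<in> {1..K}" "\<rho> k \<noteq> 1" using assms(8) by blast
  then have "0 < (1 - \<rho> k)\<^sup>2 * (cmod (h k)) ^ 4" using assms(5) by auto
  then show "\<Theta>2 > 0" unfolding \<Theta>2_def using k(1) by (intro sum_pos2[of _ k]) auto
qed (use assms in auto)

end
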